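(* Let $L>0$, $V\in C^1([0,L];\mathbb{R})$, $\varepsilon>0$, $q_\varepsilon\in L^\infty(0,L;\mathbb{R})$. For all $\alpha>0$, all $E\in\mathbb{R}$ and $\psi\in H^2(0,L)\cap H^1_0(0,L)$ with $\|\psi\|_{L^2}=1$ solving $-\varepsilon^2\psi''+(V+q_\varepsilon)\psi=E\psi$, and all points $x,y$ belonging to the same connected component of $\{z\in[0,L]: V(z)-E\ge\alpha^2\}$, we have $$\mathscr{E}^+(x)\le\exp\Big(\frac2\varepsilon\Big|\int_x^y\sqrt{V(s)-E}\,ds\Big|+\frac{\|V'\|_\infty}{\alpha^2}L+\frac{\|q_\varepsilon\|_\infty}{\alpha\varepsilon}L\Big)\mathscr{E}^+(y),$$ where $\mathscr{E}^+(x)=\varepsilon^2|\psi'(x)|^2+(V(x)-E)|\psi(x)|^2$. *)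

theory Defs
  imports "HOL-Analysis.Analysis"
begin

definition Linf_norm :: "real \<Rightarrow> (real \<Rightarrow> real) \<Rightarrow> real" where
  "Linf_norm L q = Inf {C. 0 \<le> C \<and> (AE x in lborel. x \<in> {0..L} \<longrightarrow> \<bar>q x\<bar> \<le> C)}"

definition sup_norm_on :: "real \<Rightarrow> (real \<Rightarrow> real) \<Rightarrow> real" where
  "sup_norm_on L f = Sup ((\<lambda>x. \<bar>f x\<bar>) ` {0..L})"

definition Eplus :: "real \<Rightarrow> (real \<Rightarrow> real) \<Rightarrow> real \<Rightarrow> (real \<Rightarrow> complex) \<Rightarrow> (real \<Rightarrow> complex) \<Rightarrow> real \<Rightarrow> real" where
  "Eplus \<epsilon> V E \<psi> \<psi>' x = \<epsilon>\<^sup>2 * (cmod (\<psi>' x))\<^sup>2 + (V x - E) * (cmod (\<psi> x))\<^sup>2"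

end

theory Submission
  imports Defs
begin

(*
  The energy E+(t) = eps^2 |psi'(t)|^2 + (V(t) - E) |psi(t)|^2 need not be differentiable (psi''
  is only integrable), but its right difference quotients can be controlled: integrating
  eps^2 psi'' = (V - E + q) psi gives, at every s where V - E >= alpha^2,
    limsup (t -> s+) |E+(t) - E+(s)| / (t - s)
      <= |4 (V - E) Re (psi conj psi') + V' |psi|^2| + 2 |q|_inf |psi| |psi'| <= k(s) E+(s)
  with k = (2/eps) sqrt (V - E) + |V'|_inf / alpha^2 + |q|_inf / (alpha eps), the last step by AM-GM.
  For a primitive K of k, this one-sided bound already makes exp K * E+ nondecreasing and
  exp (-K) * E+ nonincreasing (a sup argument replaces the mean value theorem), which is
  Gronwall's inequality E+(x) <= exp |int_x^y k| E+(y) on any interval where V - E >= alpha^2;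
  the integral of k is at most the exponent in the claim.
*)

lemma eventually_at_right_below:
  fixes s b :: real
  assumes "s < b"
  shows "eventually (\<lambda>t. s < t \<and> t < b) (at_right s)"
  by (rule eventually_at_rightI[OF _ assms]) auto

lemma right_Dini_nonneg_imp_le:
  fixes G :: "real \<Rightarrow> real"
  assumes "a \<le> b" and G_cont: "continuous_on {a..b} G"
    and growth: "\<And>s \<eta>. s \<in> {a..<b} \<Longrightarrow> \<eta> > 0 \<Longrightarrow>
      eventually (\<lambda>t. G s - \<eta> * (t - s) \<le> G t) (at_right s)"
  shows "G a \<le> G b"
proof (rule field_le_epsilon)
  fix e :: real assume "e > 0"
  define \<eta> where "\<eta> = e / (b - a + 1)"
  have "\<eta> > 0" using \<open>e > 0\<close> \<open>a \<le> b\<close> by (simp add: \<eta>_def)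
  define S where "S = {t \<in> {a..b}. G a - \<eta> * (t - a) \<le> G t}"
  have "closed S" unfolding S_def
    by (intro continuous_on_closed_Collect_le continuous_intros G_cont)
  moreover have "a \<in> S" using \<open>a \<le> b\<close> by (auto simp: S_def)
  moreover have bdd: "bdd_above S" by (auto simp: S_def bdd_above_def)
  ultimately have Sup_in: "Sup S \<in> S" using closed_contains_Sup by blast
  have "Sup S = b"
  proof (rule ccontr)
    assume "Sup S \<noteq> b"
    with Sup_in have m: "Sup S \<in> {a..<b}" by (auto simp: S_def)
    then have "eventually (\<lambda>t. G (Sup S) - \<eta> * (t - Sup S) \<le> G t \<and> Sup S < t \<and> t < b)
        (at_right (Sup S))"
      using growth[OF m \<open>\<eta> > 0\<close>] eventually_at_right_below[of "Sup S" b]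
      by (auto intro: eventually_conj)
    then obtain t where t: "Sup S < t" "t < b" "G (Sup S) - \<eta> * (t - Sup S) \<le> G t"
      using eventually_happens by force
    moreover have "G a - \<eta> * (Sup S - a) \<le> G (Sup S)" using Sup_in by (auto simp: S_def)
    ultimately have "t \<in> S" using m by (auto simp: S_def algebra_simps)
    then show False using cSup_upper[OF _ bdd] t(1) by fastforce
  qed
  with Sup_in have "G a - \<eta> * (b - a) \<le> G b" by (auto simp: S_def)
  moreover have "\<eta> * (b - a) \<le> e"
    using \<open>e > 0\<close> \<open>a \<le> b\<close> by (simp add: \<eta>_def field_simps)
  ultimately show "G a \<le> G b + e" by linarith
qed

lemma right_increment_mult:
  fixes F \<rho> :: "real \<Rightarrow> real"
  assumes \<rho>_pos: "\<And>t. \<rho> t > 0"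
    and \<rho>_deriv: "(\<rho> has_real_derivative \<rho>') (at_right s)"
    and F_growth: "\<And>\<eta>. \<eta> > 0 \<Longrightarrow> eventually (\<lambda>t. \<bar>F t - F s\<bar> \<le> (c + \<eta>) * (t - s)) (at_right s)"
    and "\<eta> > 0"
  shows "eventually (\<lambda>t. \<bar>\<rho> t * F t - \<rho> s * F s - \<rho>' * F s * (t - s)\<bar> \<le> (\<rho> s * c + \<eta>) * (t - s))
    (at_right s)"
proof -
  define e where "e = \<eta> / (2 * \<rho> s)"
  have "e > 0" and \<rho>_e: "\<rho> s * e = \<eta> / 2"
    using \<open>\<eta> > 0\<close> \<rho>_pos[of s] by (simp_all add: e_def)
  have "((\<lambda>t. (\<rho> t - \<rho> s) / (t - s)) \<longlongrightarrow> \<rho>') (at_right s)"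
    using \<rho>_deriv by (simp add: has_field_derivative_iff)
  moreover have "(\<rho> \<longlongrightarrow> \<rho> s) (at_right s)"
    using DERIV_continuous[OF \<rho>_deriv] by (simp add: continuous_within)
  ultimately have "((\<lambda>t. \<rho> t * (c + e) + \<bar>F s\<bar> * \<bar>(\<rho> t - \<rho> s) / (t - s) - \<rho>'\<bar>)
      \<longlongrightarrow> \<rho> s * (c + e) + \<bar>F s\<bar> * \<bar>\<rho>' - \<rho>'\<bar>) (at_right s)"
    by (intro tendsto_intros)
  moreover have "\<rho> s * (c + e) + \<bar>F s\<bar> * \<bar>\<rho>' - \<rho>'\<bar> < \<rho> s * c + \<eta>"
    using \<rho>_e \<open>\<eta> > 0\<close> by (simp add: algebra_simps)
  ultimately have "eventually (\<lambda>t. \<rho> t * (c + e) + \<bar>F s\<bar> * \<bar>(\<rho> t - \<rho> s) / (t - s) - \<rho>'\<bar>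
      < \<rho> s * c + \<eta>) (at_right s)"
    by (rule order_tendstoD(2))
  with F_growth[OF \<open>e > 0\<close>] eventually_at_right_less[of s]
  show ?thesis
  proof eventually_elim
    case (elim t)
    then have "t - s > 0" by simp
    have split: "\<rho> t * F t - \<rho> s * F s - \<rho>' * F s * (t - s)
        = \<rho> t * (F t - F s) + (t - s) * (F s * ((\<rho> t - \<rho> s) / (t - s) - \<rho>'))"
      using \<open>t - s > 0\<close> by (simp add: field_simps)
    have "\<bar>\<rho> t * F t - \<rho> s * F s - \<rho>' * F s * (t - s)\<bar>
        \<le> \<rho> t * \<bar>F t - F s\<bar> + (t - s) * (\<bar>F s\<bar> * \<bar>(\<rho> t - \<rho> s) / (t - s) - \<rho>'\<bar>)"
      unfolding split using abs_triangle_ineq \<rho>_pos[of t] \<open>t - s > 0\<close>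
      by (metis abs_mult abs_of_pos)
    also have "\<dots> \<le> \<rho> t * ((c + e) * (t - s)) + (t - s) * (\<bar>F s\<bar> * \<bar>(\<rho> t - \<rho> s) / (t - s) - \<rho>'\<bar>)"
      using elim(1) \<rho>_pos[of t] by (simp add: mult_left_mono)
    also have "\<dots> = (t - s) * (\<rho> t * (c + e) + \<bar>F s\<bar> * \<bar>(\<rho> t - \<rho> s) / (t - s) - \<rho>'\<bar>)"
      by (simp add: algebra_simps)
    also have "\<dots> \<le> (t - s) * (\<rho> s * c + \<eta>)"
      using elim(3) \<open>t - s > 0\<close> by (simp add: less_imp_le)
    finally show ?case by (simp add: mult.commute)
  qed
qed

lemma Gronwall_right_Dini:
  fixes F k :: "real \<Rightarrow> real"
  assumes "a \<le> b" and F_cont: "continuous_on {a..b} F" and k_cont: "continuous_on {a..b} k"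
    and growth: "\<And>s \<eta>. s \<in> {a..<b} \<Longrightarrow> \<eta> > 0 \<Longrightarrow>
      eventually (\<lambda>t. \<bar>F t - F s\<bar> \<le> (k s * F s + \<eta>) * (t - s)) (at_right s)"
  shows "F a \<le> exp (integral {a..b} k) * F b" and "F b \<le> exp (integral {a..b} k) * F a"
proof -
  define K where "K t = integral {a..t} k" for t
  have K_deriv: "(K has_real_derivative k s) (at s within {a..b})" if "s \<in> {a..b}" for s
    using integral_has_vector_derivative[OF k_cont that]
    unfolding K_def has_real_derivative_iff_has_vector_derivative .
  have K_cont: "continuous_on {a..b} K"
    using K_deriv DERIV_continuous continuous_on_eq_continuous_within by blast
  have K_right_deriv: "(K has_real_derivative k s) (at_right s)" if "s \<in> {a..<b}" for s
  proof -
    have "(K has_real_derivative k s) (at s within {s..b})"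
      using that by (intro has_field_derivative_subset[OF K_deriv]) auto
    then show ?thesis using that by (simp add: at_within_Icc_at_right)
  qed
  have "exp (K a) * F a \<le> exp (K b) * F b"
  proof (rule right_Dini_nonneg_imp_le[OF \<open>a \<le> b\<close>])
    show "continuous_on {a..b} (\<lambda>t. exp (K t) * F t)" by (intro continuous_intros K_cont F_cont)
    fix s \<eta> :: real assume s: "s \<in> {a..<b}" and "\<eta> > 0"
    have "((\<lambda>t. exp (K t)) has_real_derivative exp (K s) * k s) (at_right s)"
      using K_right_deriv[OF s] by (auto intro!: derivative_eq_intros)
    from right_increment_mult[OF _ this _ \<open>\<eta> > 0\<close>, of F "k s * F s"] growth[OF s]
    show "eventually (\<lambda>t. exp (K s) * F s - \<eta> * (t - s) \<le> exp (K t) * F t) (at_right s)"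
      by (auto elim!: eventually_mono simp: abs_le_iff algebra_simps)
  qed
  moreover have "- (exp (- K a) * F a) \<le> - (exp (- K b) * F b)"
  proof (rule right_Dini_nonneg_imp_le[OF \<open>a \<le> b\<close>])
    show "continuous_on {a..b} (\<lambda>t. - (exp (- K t) * F t))" by (intro continuous_intros K_cont F_cont)
    fix s \<eta> :: real assume s: "s \<in> {a..<b}" and "\<eta> > 0"
    have "((\<lambda>t. exp (- K t)) has_real_derivative - exp (- K s) * k s) (at_right s)"
      using K_right_deriv[OF s] by (auto intro!: derivative_eq_intros)
    from right_increment_mult[OF _ this _ \<open>\<eta> > 0\<close>, of F "k s * F s"] growth[OF s]
    show "eventually (\<lambda>t. - (exp (- K s) * F s) - \<eta> * (t - s) \<le> - (exp (- K t) * F t)) (at_right s)"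
      by (auto elim!: eventually_mono simp: abs_le_iff algebra_simps)
  qed
  ultimately have "F a \<le> exp (K b) * F b" and "exp (- K b) * F b \<le> F a"
    by (simp_all add: K_def)
  then show "F a \<le> exp (integral {a..b} k) * F b" and "F b \<le> exp (integral {a..b} k) * F a"
    by (simp_all add: K_def exp_minus field_simps)
qed

lemma has_vector_derivative_right_quotient:
  fixes f :: "real \<Rightarrow> 'a::real_normed_vector"
  assumes "(f has_vector_derivative D) (at_right x)"
  shows "((\<lambda>y. (f y - f x) /\<^sub>R (y - x)) \<longlongrightarrow> D) (at_right x)"
proof -
  have "((\<lambda>y. (1 / \<bar>y - x\<bar>) *\<^sub>R (f y - (f x + (y - x) *\<^sub>R D))) \<longlongrightarrow> 0) (at_right x)"
    using assms by (simp add: has_vector_derivative_def has_derivative_within)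
  then have "((\<lambda>y. (f y - f x) /\<^sub>R (y - x) - D) \<longlongrightarrow> 0) (at_right x)"
    by (rule Lim_transform_eventually)
      (use eventually_at_right_less[of x] in
        \<open>auto elim!: eventually_mono simp: scaleR_add_right scaleR_diff_right divide_inverse_commute\<close>)
  then show ?thesis by (simp add: LIM_zero_iff)
qed

lemma integral_average_tendsto:
  fixes f :: "real \<Rightarrow> 'a::banach"
  assumes "continuous_on {s..b} f" and "s < b"
  shows "((\<lambda>t. integral {s..t} f /\<^sub>R (t - s)) \<longlongrightarrow> f s) (at_right s)"
proof -
  have "((\<lambda>t. integral {s..t} f) has_vector_derivative f s) (at_right s)"
    using integral_has_vector_derivative[OF assms(1), of s] assms(2)
    by (simp add: at_within_Icc_at_right)
  then show ?thesis
    using has_vector_derivative_right_quotient by fastforce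
qed

lemma cmod_add_square: "(cmod (x + y))\<^sup>2 = (cmod x)\<^sup>2 + 2 * Re (y * cnj x) + (cmod y)\<^sup>2"
  unfolding cmod_power2 by (simp add: power2_eq_square algebra_simps)

lemma abs_Re_mult_cnj_le: "\<bar>Re (x * cnj y)\<bar> \<le> cmod x * cmod y"
  by (metis abs_Re_le_cmod complex_mod_cnj norm_mult)

lemma Eplus_nonneg: "E \<le> V x \<Longrightarrow> 0 \<le> Eplus \<epsilon> V E \<psi> \<phi> x"
  by (simp add: Eplus_def)

lemma kinetic_increment_le:
  fixes \<Phi> \<Phi>' A R :: complex and \<epsilon> h C J G :: real
  assumes "h > 0"
    and split: "of_real (\<epsilon>\<^sup>2) * (\<Phi>' - \<Phi>) = of_real h * A + R"
    and R_le: "cmod R \<le> C * h * J"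
  shows "\<bar>\<epsilon>\<^sup>2 * (cmod \<Phi>')\<^sup>2 - \<epsilon>\<^sup>2 * (cmod \<Phi>)\<^sup>2 + G\<bar>
    \<le> h * (\<bar>2 * Re (A * cnj \<Phi>) + G / h\<bar> + cmod (\<Phi>' - \<Phi>) * (cmod A + C * J) + 2 * C * J * cmod \<Phi>)"
proof -
  define \<Delta> where "\<Delta> = \<Phi>' - \<Phi>"
  have "(cmod \<Phi>')\<^sup>2 = (cmod \<Phi>)\<^sup>2 + 2 * Re (\<Delta> * cnj \<Phi>) + (cmod \<Delta>)\<^sup>2"
    using cmod_add_square[of \<Phi> \<Delta>] by (simp add: \<Delta>_def)
  then have "\<epsilon>\<^sup>2 * (cmod \<Phi>')\<^sup>2 - \<epsilon>\<^sup>2 * (cmod \<Phi>)\<^sup>2 = \<epsilon>\<^sup>2 * (cmod \<Delta>)\<^sup>2 + 2 * Re (of_real (\<epsilon>\<^sup>2) * \<Delta> * cnj \<Phi>)"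
    by (simp add: algebra_simps)
  also have "Re (of_real (\<epsilon>\<^sup>2) * \<Delta> * cnj \<Phi>) = h * Re (A * cnj \<Phi>) + Re (R * cnj \<Phi>)"
    using split by (simp add: \<Delta>_def algebra_simps)
  finally have increment: "\<epsilon>\<^sup>2 * (cmod \<Phi>')\<^sup>2 - \<epsilon>\<^sup>2 * (cmod \<Phi>)\<^sup>2 + G
      = h * (2 * Re (A * cnj \<Phi>) + G / h) + \<epsilon>\<^sup>2 * (cmod \<Delta>)\<^sup>2 + 2 * Re (R * cnj \<Phi>)"
    using \<open>h > 0\<close> by (simp add: field_simps)
  have kinetic: "\<epsilon>\<^sup>2 * (cmod \<Delta>)\<^sup>2 \<le> h * (cmod \<Delta> * (cmod A + C * J))"
  proof -
    have "\<epsilon>\<^sup>2 * (cmod \<Delta>)\<^sup>2 = cmod \<Delta> * cmod (of_real h * A + R)"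
      by (simp flip: split add: \<Delta>_def norm_mult power2_eq_square)
    also have "\<dots> \<le> cmod \<Delta> * (h * cmod A + C * h * J)"
      using norm_triangle_ineq[of "of_real h * A" R] R_le \<open>h > 0\<close>
      by (intro mult_left_mono) (auto simp: norm_mult)
    finally show ?thesis by (simp add: algebra_simps)
  qed
  have cross: "\<bar>2 * Re (R * cnj \<Phi>)\<bar> \<le> h * (2 * C * J * cmod \<Phi>)"
  proof -
    have "\<bar>2 * Re (R * cnj \<Phi>)\<bar> \<le> 2 * (cmod R * cmod \<Phi>)"
      using abs_Re_mult_cnj_le[of R \<Phi>] by linarith
    also have "\<dots> \<le> 2 * (C * h * J * cmod \<Phi>)"
      using mult_right_mono[OF R_le, of "cmod \<Phi>"] by simp
    finally show ?thesis by (simp add: algebra_simps)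
  qed
  define X where "X = 2 * Re (A * cnj \<Phi>) + G / h"
  have "\<bar>h * X\<bar> = h * \<bar>X\<bar>"
    using \<open>h > 0\<close> by (simp add: abs_mult)
  then show ?thesis
    unfolding increment X_def[symmetric] \<Delta>_def[symmetric] distrib_left[of h]
    using kinetic cross abs_ge_self[of "h * X"] abs_ge_minus_self[of "h * X"]
      abs_ge_self[of "2 * Re (R * cnj \<Phi>)"] abs_ge_minus_self[of "2 * Re (R * cnj \<Phi>)"]
      mult_nonneg_nonneg[OF zero_le_power2[of \<epsilon>] zero_le_power2[of "cmod \<Delta>"]]
    by (simp only: abs_le_iff) linarith
qed

lemma has_real_derivative_weighted_cmod_square:
  fixes \<psi> :: "real \<Rightarrow> complex" and W :: "real \<Rightarrow> real"
  assumes "(\<psi> has_vector_derivative \<Phi>) (at x within S)" and "(W has_real_derivative w') (at x within S)"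
  shows "((\<lambda>t. W t * (cmod (\<psi> t))\<^sup>2) has_real_derivative
      w' * (cmod (\<psi> x))\<^sup>2 + 2 * W x * Re (\<psi> x * cnj \<Phi>)) (at x within S)"
  unfolding cmod_power2
  by (rule derivative_eq_intros assms refl | simp add: algebra_simps)+

lemma Eplus_right_increment_le:
  fixes \<psi> \<phi> :: "real \<Rightarrow> complex" and V :: "real \<Rightarrow> real"
  assumes "s < b"
    and \<psi>_deriv: "(\<psi> has_vector_derivative \<phi> s) (at_right s)"
    and V_deriv: "(V has_real_derivative v) (at_right s)"
    and \<psi>_cont: "continuous_on {s..b} \<psi>" and \<phi>_cont: "continuous_on {s..b} \<phi>"
    and V_cont: "continuous_on {s..b} V"
    and increment: "\<And>t. t \<in> {s..b} \<Longrightarrow>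
      cmod (of_real (\<epsilon>\<^sup>2) * (\<phi> t - \<phi> s) - integral {s..t} (\<lambda>u. of_real (V u - E) * \<psi> u))
        \<le> C * integral {s..t} (\<lambda>u. cmod (\<psi> u))"
    and "\<eta> > 0"
  shows "eventually (\<lambda>t. \<bar>Eplus \<epsilon> V E \<psi> \<phi> t - Eplus \<epsilon> V E \<psi> \<phi> s\<bar>
      \<le> (\<bar>4 * (V s - E) * Re (\<psi> s * cnj (\<phi> s)) + v * (cmod (\<psi> s))\<^sup>2\<bar>
          + 2 * C * cmod (\<psi> s) * cmod (\<phi> s) + \<eta>) * (t - s)) (at_right s)"
proof -
  define P \<Phi> where "P = \<psi> s" and "\<Phi> = \<phi> s"
  define w where "w = V s - E"
  define g where "g t = (V t - E) * (cmod (\<psi> t))\<^sup>2" for t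
  define A where "A t = integral {s..t} (\<lambda>u. of_real (V u - E) * \<psi> u) /\<^sub>R (t - s)" for t
  define J where "J t = integral {s..t} (\<lambda>u. cmod (\<psi> u)) / (t - s)" for t
  \<comment> \<open>By \<open>kinetic_increment_le\<close>, \<open>U t\<close> bounds the difference quotient of \<open>Eplus\<close>; in the limit
    the term with \<open>\<phi> t - \<Phi>\<close> vanishes and \<open>U\<close> tends to the rate.\<close>
  define U where "U t = \<bar>2 * Re (A t * cnj \<Phi>) + (g t - g s) / (t - s)\<bar>
    + cmod (\<phi> t - \<Phi>) * (cmod (A t) + C * J t) + 2 * C * J t * cmod \<Phi>" for t
  have "((\<lambda>t. V t - E) has_real_derivative v) (at_right s)"
    using V_deriv by (auto intro!: derivative_eq_intros)
  then have "(g has_real_derivative v * (cmod P)\<^sup>2 + 2 * w * Re (P * cnj \<Phi>)) (at_right s)"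
    unfolding g_def[abs_def] P_def \<Phi>_def w_def
    by (rule has_real_derivative_weighted_cmod_square[OF \<psi>_deriv])
  then have g_lim: "((\<lambda>t. (g t - g s) / (t - s)) \<longlongrightarrow> v * (cmod P)\<^sup>2 + 2 * w * Re (P * cnj \<Phi>)) (at_right s)"
    by (simp add: has_field_derivative_iff)
  have "(A \<longlongrightarrow> of_real w * P) (at_right s)"
    unfolding A_def P_def w_def
    by (intro integral_average_tendsto[OF _ \<open>s < b\<close>] continuous_intros V_cont \<psi>_cont)
  moreover have "(J \<longlongrightarrow> cmod P) (at_right s)"
    using integral_average_tendsto[OF continuous_on_norm[OF \<psi>_cont] \<open>s < b\<close>]
    by (simp add: J_def[abs_def] P_def divide_inverse_commute)
  moreover have "(\<phi> \<longlongrightarrow> \<Phi>) (at_right s)"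
    using \<phi>_cont \<open>s < b\<close> unfolding \<Phi>_def
    by (simp add: continuous_on_Icc_at_rightD)
  ultimately have "(U \<longlongrightarrow> \<bar>2 * Re (of_real w * P * cnj \<Phi>) + (v * (cmod P)\<^sup>2 + 2 * w * Re (P * cnj \<Phi>))\<bar>
      + cmod (\<Phi> - \<Phi>) * (cmod (of_real w * P) + C * cmod P) + 2 * C * cmod P * cmod \<Phi>) (at_right s)"
    unfolding U_def by (intro tendsto_intros g_lim)
  moreover have "\<bar>2 * Re (of_real w * P * cnj \<Phi>) + (v * (cmod P)\<^sup>2 + 2 * w * Re (P * cnj \<Phi>))\<bar>
      + cmod (\<Phi> - \<Phi>) * (cmod (of_real w * P) + C * cmod P) + 2 * C * cmod P * cmod \<Phi>
      < \<bar>4 * w * Re (P * cnj \<Phi>) + v * (cmod P)\<^sup>2\<bar> + 2 * C * cmod P * cmod \<Phi> + \<eta>"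
    using \<open>\<eta> > 0\<close> by (simp add: mult.assoc)
  ultimately have "eventually (\<lambda>t. U t < \<bar>4 * w * Re (P * cnj \<Phi>) + v * (cmod P)\<^sup>2\<bar>
      + 2 * C * cmod P * cmod \<Phi> + \<eta>) (at_right s)"
    by (rule order_tendstoD(2))
  with eventually_at_right_below[OF \<open>s < b\<close>] show ?thesis
  proof eventually_elim
    case (elim t)
    then have "t - s > 0" "t \<in> {s..b}" by auto
    have "\<bar>Eplus \<epsilon> V E \<psi> \<phi> t - Eplus \<epsilon> V E \<psi> \<phi> s\<bar>
        = \<bar>\<epsilon>\<^sup>2 * (cmod (\<phi> t))\<^sup>2 - \<epsilon>\<^sup>2 * (cmod \<Phi>)\<^sup>2 + (g t - g s)\<bar>"
      by (simp add: Eplus_def g_def \<Phi>_def algebra_simps)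
    also have "\<dots> \<le> (t - s) * U t"
      unfolding U_def
    proof (rule kinetic_increment_le[OF \<open>t - s > 0\<close>])
      show "of_real (\<epsilon>\<^sup>2) * (\<phi> t - \<Phi>) = of_real (t - s) * A t
          + (of_real (\<epsilon>\<^sup>2) * (\<phi> t - \<Phi>) - integral {s..t} (\<lambda>u. of_real (V u - E) * \<psi> u))"
        using \<open>t - s > 0\<close> by (simp add: A_def scaleR_conv_of_real)
      show "cmod (of_real (\<epsilon>\<^sup>2) * (\<phi> t - \<Phi>) - integral {s..t} (\<lambda>u. of_real (V u - E) * \<psi> u))
          \<le> C * (t - s) * J t"
        using increment[OF \<open>t \<in> {s..b}\<close>] \<open>t - s > 0\<close> by (simp add: J_def \<Phi>_def)
    qed
    also have "\<dots> \<le> (t - s) * (\<bar>4 * w * Re (P * cnj \<Phi>) + v * (cmod P)\<^sup>2\<bar>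
        + 2 * C * cmod P * cmod \<Phi> + \<eta>)"
      using elim(2) \<open>t - s > 0\<close> by (simp add: less_imp_le)
    finally show ?case by (simp add: P_def \<Phi>_def w_def mult.commute)
  qed
qed

lemma energy_rate_le:
  fixes p f w \<epsilon> \<alpha> C M v r :: real
  assumes "\<alpha> > 0" "\<epsilon> > 0" "w \<ge> \<alpha>\<^sup>2" "C \<ge> 0" "\<bar>v\<bar> \<le> M" "\<bar>r\<bar> \<le> p * f" "p \<ge> 0" "f \<ge> 0"
  shows "\<bar>4 * w * r + v * p\<^sup>2\<bar> + 2 * C * p * f
    \<le> (2 / \<epsilon> * sqrt w + (M / \<alpha>\<^sup>2 + C / (\<alpha> * \<epsilon>))) * (\<epsilon>\<^sup>2 * f\<^sup>2 + w * p\<^sup>2)"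
proof -
  have "w > 0" using assms(1,3) by (smt (verit) zero_less_power2)
  have "\<bar>4 * w * r + v * p\<^sup>2\<bar> \<le> 4 * w * \<bar>r\<bar> + \<bar>v\<bar> * p\<^sup>2"
    using \<open>w > 0\<close> abs_triangle_ineq[of "4 * w * r" "v * p\<^sup>2"] by (simp add: abs_mult)
  also have "\<dots> \<le> 4 * w * (p * f) + M * p\<^sup>2"
    using assms(5,6) \<open>w > 0\<close> by (intro add_mono mult_left_mono mult_right_mono) auto
  finally have "\<bar>4 * w * r + v * p\<^sup>2\<bar> \<le> 4 * w * (p * f) + M * p\<^sup>2" .
  moreover have "4 * w * (p * f) \<le> 2 / \<epsilon> * sqrt w * (\<epsilon>\<^sup>2 * f\<^sup>2 + w * p\<^sup>2)"
  proof -
    have "0 \<le> 2 / \<epsilon> * sqrt w * (\<epsilon> * f - sqrt w * p)\<^sup>2"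
      using assms(2) \<open>w > 0\<close> by simp
    also have "\<dots> = 2 / \<epsilon> * sqrt w * (\<epsilon>\<^sup>2 * f\<^sup>2 + w * p\<^sup>2) - 4 * w * (p * f)"
      using assms(2) \<open>w > 0\<close> by (simp add: field_simps power2_eq_square)
    finally show ?thesis by simp
  qed
  moreover have "M * p\<^sup>2 \<le> M / \<alpha>\<^sup>2 * (\<epsilon>\<^sup>2 * f\<^sup>2 + w * p\<^sup>2)"
  proof -
    have "M * p\<^sup>2 = M / \<alpha>\<^sup>2 * (\<alpha>\<^sup>2 * p\<^sup>2)" using assms(1) by simp
    also have "\<dots> \<le> M / \<alpha>\<^sup>2 * (\<epsilon>\<^sup>2 * f\<^sup>2 + w * p\<^sup>2)"
      using assms(3,5) by (intro mult_left_mono add_increasing mult_right_mono) auto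
    finally show ?thesis .
  qed
  moreover have "2 * C * p * f \<le> C / (\<alpha> * \<epsilon>) * (\<epsilon>\<^sup>2 * f\<^sup>2 + w * p\<^sup>2)"
  proof -
    have "0 \<le> C / (\<alpha> * \<epsilon>) * (\<epsilon> * f - \<alpha> * p)\<^sup>2" using assms by simp
    also have "\<dots> = C / (\<alpha> * \<epsilon>) * (\<epsilon>\<^sup>2 * f\<^sup>2 + \<alpha>\<^sup>2 * p\<^sup>2) - 2 * C * p * f"
      using assms(1,2) by (simp add: field_simps power2_eq_square)
    also have "\<dots> \<le> C / (\<alpha> * \<epsilon>) * (\<epsilon>\<^sup>2 * f\<^sup>2 + w * p\<^sup>2) - 2 * C * p * f"
      using assms by (intro diff_right_mono mult_left_mono add_left_mono mult_right_mono) auto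
    finally show ?thesis by simp
  qed
  ultimately show ?thesis unfolding distrib_right by linarith
qed

lemma abs_interval_integral_eq_integral:
  fixes f :: "real \<Rightarrow> real"
  assumes "continuous_on {min x y..max x y} f" and "\<And>s. s \<in> {min x y..max x y} \<Longrightarrow> f s \<ge> 0"
  shows "\<bar>LBINT s=x..y. f s\<bar> = integral {min x y..max x y} f"
proof -
  have "(LBINT s=min x y..max x y. f s) = integral {min x y..max x y} f"
    by (intro interval_integral_eq_integral borel_integrable_atLeastAtMost' assms(1)) simp
  moreover have "integral {min x y..max x y} f \<ge> 0"
    by (intro integral_nonneg integrable_continuous_interval assms)
  ultimately show ?thesis
    by (cases "x \<le> y") (auto simp: min_def max_def interval_integral_endpoints_reverse[of x y])
qed

text \<open>The hypothesis \<open>increment\<close> is the integrated form of \<open>\<epsilon>\<^sup>2 \<phi>' = (V - E + q) \<psi>\<close>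
  with \<open>\<bar>q\<bar> \<le> C\<close>, which is all that is used of the equation.\<close>

context
  fixes \<epsilon> \<alpha> C M E a b :: real and \<psi> \<phi> :: "real \<Rightarrow> complex" and V V' :: "real \<Rightarrow> real"
  assumes eps_pos: "\<epsilon> > 0" and alpha_pos: "\<alpha> > 0" and C_nonneg: "C \<ge> 0"
    and \<psi>_deriv: "\<And>t. t \<in> {a..b} \<Longrightarrow> (\<psi> has_vector_derivative \<phi> t) (at t within {a..b})"
    and V_deriv: "\<And>t. t \<in> {a..b} \<Longrightarrow> (V has_real_derivative V' t) (at t within {a..b})"
    and \<phi>_cont: "continuous_on {a..b} \<phi>"
    and V'_le: "\<And>t. t \<in> {a..b} \<Longrightarrow> \<bar>V' t\<bar> \<le> M"
    and above: "\<And>t. t \<in> {a..b} \<Longrightarrow> V t - E \<ge> \<alpha>\<^sup>2"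
    and increment: "\<And>s t. a \<le> s \<Longrightarrow> s \<le> t \<Longrightarrow> t \<le> b \<Longrightarrow>
      cmod (of_real (\<epsilon>\<^sup>2) * (\<phi> t - \<phi> s) - integral {s..t} (\<lambda>u. of_real (V u - E) * \<psi> u))
        \<le> C * integral {s..t} (\<lambda>u. cmod (\<psi> u))"
begin

private lemma continuous_on_\<psi>: "continuous_on {a..b} \<psi>"
  using \<psi>_deriv has_vector_derivative_continuous continuous_on_eq_continuous_within by blast

private lemma continuous_on_V: "continuous_on {a..b} V"
  using V_deriv DERIV_continuous continuous_on_eq_continuous_within by blast

lemma Eplus_right_increment_le_rate:
  assumes s: "s \<in> {a..<b}" and "\<eta> > 0"
  shows "eventually (\<lambda>t. \<bar>Eplus \<epsilon> V E \<psi> \<phi> t - Eplus \<epsilon> V E \<psi> \<phi> s\<bar>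
    \<le> ((2 / \<epsilon> * sqrt (V s - E) + (M / \<alpha>\<^sup>2 + C / (\<alpha> * \<epsilon>))) * Eplus \<epsilon> V E \<psi> \<phi> s + \<eta>) * (t - s))
    (at_right s)"
proof -
  have "{s..b} \<subseteq> {a..b}" and "s \<in> {a..b}" using s by auto
  moreover have "at_right s = at s within {s..b}"
    using s by (simp add: at_within_Icc_at_right)
  ultimately have \<psi>_right: "(\<psi> has_vector_derivative \<phi> s) (at_right s)"
    and V_right: "(V has_real_derivative V' s) (at_right s)"
    by (auto intro: has_vector_derivative_within_subset[OF \<psi>_deriv]
        has_field_derivative_subset[OF V_deriv])
  have growth: "eventually (\<lambda>t. \<bar>Eplus \<epsilon> V E \<psi> \<phi> t - Eplus \<epsilon> V E \<psi> \<phi> s\<bar>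
      \<le> (\<bar>4 * (V s - E) * Re (\<psi> s * cnj (\<phi> s)) + V' s * (cmod (\<psi> s))\<^sup>2\<bar>
          + 2 * C * cmod (\<psi> s) * cmod (\<phi> s) + \<eta>) * (t - s)) (at_right s)"
    using s \<open>{s..b} \<subseteq> {a..b}\<close> \<open>\<eta> > 0\<close>
    by (intro Eplus_right_increment_le[where b = b] increment \<psi>_right V_right
        continuous_on_subset[OF continuous_on_\<psi>] continuous_on_subset[OF \<phi>_cont]
        continuous_on_subset[OF continuous_on_V]) auto
  have rate: "\<bar>4 * (V s - E) * Re (\<psi> s * cnj (\<phi> s)) + V' s * (cmod (\<psi> s))\<^sup>2\<bar>
      + 2 * C * cmod (\<psi> s) * cmod (\<phi> s)
      \<le> (2 / \<epsilon> * sqrt (V s - E) + (M / \<alpha>\<^sup>2 + C / (\<alpha> * \<epsilon>))) * Eplus \<epsilon> V E \<psi> \<phi> s"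
    unfolding Eplus_def using s abs_Re_mult_cnj_le[of "\<psi> s" "\<phi> s"]
    by (intro energy_rate_le above V'_le eps_pos alpha_pos C_nonneg) auto
  from growth eventually_at_right_less[of s] show ?thesis
  proof eventually_elim
    case (elim t)
    then show ?case
      using rate by (elim order_trans) (simp add: mult_right_mono)
  qed
qed

lemma Eplus_le_exp_Eplus:
  assumes "x \<in> {a..b}" and "y \<in> {a..b}"
  shows "Eplus \<epsilon> V E \<psi> \<phi> x
    \<le> exp (2 / \<epsilon> * \<bar>LBINT s=x..y. sqrt (V s - E)\<bar> + \<bar>y - x\<bar> * (M / \<alpha>\<^sup>2 + C / (\<alpha> * \<epsilon>)))
      * Eplus \<epsilon> V E \<psi> \<phi> y"
proof -
  define c d where "c = min x y" and "d = max x y"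
  define k where "k s = 2 / \<epsilon> * sqrt (V s - E) + (M / \<alpha>\<^sup>2 + C / (\<alpha> * \<epsilon>))" for s
  have "c \<le> d" and cd: "{c..d} \<subseteq> {a..b}" using assms by (auto simp: c_def d_def)
  have sqrt_cont: "continuous_on {c..d} (\<lambda>s. sqrt (V s - E))"
    by (intro continuous_intros continuous_on_subset[OF continuous_on_V cd])
  have "continuous_on {c..d} (Eplus \<epsilon> V E \<psi> \<phi>)"
    unfolding Eplus_def
    by (intro continuous_intros continuous_on_subset[OF _ cd] \<phi>_cont continuous_on_\<psi> continuous_on_V)
  moreover have "continuous_on {c..d} k"
    unfolding k_def[abs_def] by (intro continuous_intros sqrt_cont)
  moreover have "eventually (\<lambda>t. \<bar>Eplus \<epsilon> V E \<psi> \<phi> t - Eplus \<epsilon> V E \<psi> \<phi> s\<bar>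
      \<le> (k s * Eplus \<epsilon> V E \<psi> \<phi> s + \<eta>) * (t - s)) (at_right s)"
    if "s \<in> {c..<d}" and "\<eta> > 0" for s \<eta>
    unfolding k_def using that cd by (intro Eplus_right_increment_le_rate) auto
  ultimately have Gronwall: "Eplus \<epsilon> V E \<psi> \<phi> c \<le> exp (integral {c..d} k) * Eplus \<epsilon> V E \<psi> \<phi> d"
    "Eplus \<epsilon> V E \<psi> \<phi> d \<le> exp (integral {c..d} k) * Eplus \<epsilon> V E \<psi> \<phi> c"
    using Gronwall_right_Dini[OF \<open>c \<le> d\<close>] by blast+
  have "integral {c..d} k = 2 / \<epsilon> * integral {c..d} (\<lambda>s. sqrt (V s - E))
      + (d - c) * (M / \<alpha>\<^sup>2 + C / (\<alpha> * \<epsilon>))"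
    unfolding k_def[abs_def] using \<open>c \<le> d\<close> eps_pos
    by (subst integral_add) (auto intro!: integrable_continuous_interval continuous_intros sqrt_cont)
  moreover have "\<bar>LBINT s=x..y. sqrt (V s - E)\<bar> = integral {c..d} (\<lambda>s. sqrt (V s - E))"
    unfolding c_def d_def
  proof (rule abs_interval_integral_eq_integral)
    show "continuous_on {min x y..max x y} (\<lambda>s. sqrt (V s - E))"
      using sqrt_cont by (simp add: c_def d_def)
    show "sqrt (V s - E) \<ge> 0" if "s \<in> {min x y..max x y}" for s
    proof -
      have "s \<in> {a..b}" using that cd by (auto simp: c_def d_def)
      then show ?thesis using above zero_le_power2[of \<alpha>] by (meson order_trans real_sqrt_ge_zero)
    qed
  qed
  moreover have "\<bar>y - x\<bar> = d - c" by (simp add: c_def d_def)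
  ultimately have "integral {c..d} k
      = 2 / \<epsilon> * \<bar>LBINT s=x..y. sqrt (V s - E)\<bar> + \<bar>y - x\<bar> * (M / \<alpha>\<^sup>2 + C / (\<alpha> * \<epsilon>))"
    by simp
  then show ?thesis
    using Gronwall by (cases "x \<le> y") (auto simp: c_def d_def)
qed

end

lemma AE_abs_le_Linf_norm:
  assumes "\<exists>C. AE t in lborel. t \<in> {0..L} \<longrightarrow> \<bar>q t\<bar> \<le> C"
  shows "AE t in lborel. t \<in> {0..L} \<longrightarrow> \<bar>q t\<bar> \<le> Linf_norm L q"
    and "Linf_norm L q \<ge> 0"
proof -
  define S where "S = {C. 0 \<le> C \<and> (AE t in lborel. t \<in> {0..L} \<longrightarrow> \<bar>q t\<bar> \<le> C)}"
  have Linf: "Linf_norm L q = Inf S" by (simp add: Linf_norm_def S_def)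
  obtain C where "AE t in lborel. t \<in> {0..L} \<longrightarrow> \<bar>q t\<bar> \<le> C" using assms by blast
  then have "max C 0 \<in> S" unfolding S_def by (auto elim!: eventually_mono)
  then have "S \<noteq> {}" by blast
  then show "Linf_norm L q \<ge> 0"
    unfolding Linf by (rule cInf_greatest) (auto simp: S_def)
  have approx: "AE t in lborel. t \<in> {0..L} \<longrightarrow> \<bar>q t\<bar> \<le> Linf_norm L q + 1 / Suc n"
    for n :: nat
  proof -
    have "Inf S < Linf_norm L q + 1 / Suc n" unfolding Linf by simp
    then obtain c where "c \<in> S" "c < Linf_norm L q + 1 / Suc n"
      using cInf_lessD[OF \<open>S \<noteq> {}\<close>] by blast
    then show ?thesis unfolding S_def by (auto elim!: eventually_mono)
  qed
  have "AE t in lborel. \<forall>n::nat. t \<in> {0..L} \<longrightarrow> \<bar>q t\<bar> \<le> Linf_norm L q + 1 / Suc n"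
    by (rule AE_all_countable[THEN iffD2]) (intro allI approx)
  then show "AE t in lborel. t \<in> {0..L} \<longrightarrow> \<bar>q t\<bar> \<le> Linf_norm L q"
  proof (rule eventually_mono, intro impI)
    fix t assume le: "\<forall>n::nat. t \<in> {0..L} \<longrightarrow> \<bar>q t\<bar> \<le> Linf_norm L q + 1 / Suc n"
      and "t \<in> {0..L}"
    show "\<bar>q t\<bar> \<le> Linf_norm L q"
    proof (rule field_le_epsilon)
      fix e :: real assume "e > 0"
      then obtain n where "1 / Suc n < e" by (rule nat_approx_posE)
      moreover have "\<bar>q t\<bar> \<le> Linf_norm L q + 1 / Suc n"
        using le \<open>t \<in> {0..L}\<close> by blast
      ultimately show "\<bar>q t\<bar> \<le> Linf_norm L q + e" by linarith
    qed
  qed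
qed

lemma abs_le_sup_norm_on:
  assumes "continuous_on {0..L} f" and "t \<in> {0..L}"
  shows "\<bar>f t\<bar> \<le> sup_norm_on L f"
proof -
  have "compact ((\<lambda>x. \<bar>f x\<bar>) ` {0..L})"
    by (intro compact_continuous_image continuous_intros assms(1) compact_Icc)
  then have "bdd_above ((\<lambda>x. \<bar>f x\<bar>) ` {0..L})"
    by (intro bounded_imp_bdd_above compact_imp_bounded)
  then show ?thesis
    unfolding sup_norm_on_def using assms(2) by (rule cSUP_upper2) simp
qed

lemma primitive_increment_eq_integral:
  fixes f g :: "real \<Rightarrow> 'a::euclidean_space"
  assumes g_int: "set_integrable lborel {0..L} g"
    and f_eq: "\<And>t. t \<in> {0..L} \<Longrightarrow> f t = f 0 + (LBINT s=0..t. g s)"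
    and st: "0 \<le> s" "s \<le> t" "t \<le> L"
  shows "f t - f s = integral {s..t} g"
proof -
  have f_integral: "f u = f 0 + integral {0..u} g" if "u \<in> {0..L}" for u
  proof -
    have "set_integrable lborel {0..u} g"
      using that by (intro set_integrable_subset[OF g_int]) auto
    then have "(LBINT s=ereal 0..ereal u. g s) = integral {0..u} g"
      using that by (intro interval_integral_eq_integral) auto
    then show ?thesis using f_eq[OF that] by (simp add: zero_ereal_def)
  qed
  have "set_integrable lborel {0..t} g"
    using st by (intro set_integrable_subset[OF g_int]) auto
  then have "g integrable_on {0..t}"
    by (rule set_borel_integral_eq_integral(1))
  then have "integral {0..s} g + integral {s..t} g = integral {0..t} g"
    using st by (intro Henstock_Kurzweil_Integration.integral_combine) auto
  moreover have "f t = f 0 + integral {0..t} g" and "f s = f 0 + integral {0..s} g"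
    using st by (auto intro!: f_integral)
  ultimately show ?thesis by (simp add: algebra_simps)
qed

lemma continuous_on_primitive:
  fixes f g :: "real \<Rightarrow> 'a::euclidean_space"
  assumes g_int: "set_integrable lborel {0..L} g"
    and f_eq: "\<And>t. t \<in> {0..L} \<Longrightarrow> f t = f 0 + (LBINT s=0..t. g s)"
  shows "continuous_on {0..L} f"
proof -
  have "g integrable_on {0..L}"
    using set_borel_integral_eq_integral(1)[OF g_int] .
  then have "continuous_on {0..L} (\<lambda>t. f 0 + integral {0..t} g)"
    by (intro continuous_intros indefinite_integral_continuous_1)
  then show ?thesis
  proof (rule continuous_on_eq)
    fix t assume "t \<in> {0..L}"
    then show "f 0 + integral {0..t} g = f t"
      using primitive_increment_eq_integral[OF g_int f_eq, of 0 t] by (simp add: algebra_simps)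
  qed
qed

lemma norm_integral_le_AE:
  fixes f :: "real \<Rightarrow> 'a::euclidean_space"
  assumes "set_integrable lborel {s..t} f" and "continuous_on {s..t} g"
    and "AE u in lborel. u \<in> {s..t} \<longrightarrow> norm (f u) \<le> g u"
  shows "norm (integral {s..t} f) \<le> integral {s..t} g"
proof -
  have g_int: "set_integrable lborel {s..t} g"
    using assms(2) by (rule borel_integrable_atLeastAtMost')
  have "norm (integral {s..t} f) = norm (LINT u:{s..t}|lborel. f u)"
    using set_borel_integral_eq_integral(2)[OF assms(1)] by simp
  also have "\<dots> \<le> (LINT u:{s..t}|lborel. norm (f u))"
    by (rule set_integral_norm_bound[OF assms(1)])
  also have "\<dots> \<le> (LINT u:{s..t}|lborel. g u)"
    using assms(3) by (intro set_integral_mono_AE set_integrable_norm assms(1) g_int) auto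
  also have "\<dots> = integral {s..t} g"
    using set_borel_integral_eq_integral(2)[OF g_int] by simp
  finally show ?thesis .
qed

lemma Schroedinger_increment_le:
  fixes \<psi> \<psi>' \<psi>'' :: "real \<Rightarrow> complex" and V q :: "real \<Rightarrow> real"
  assumes \<psi>''_int: "set_integrable lborel {0..L} \<psi>''"
    and \<psi>'_eq: "\<And>t. t \<in> {0..L} \<Longrightarrow> \<psi>' t = \<psi>' 0 + (LBINT s=0..t. \<psi>'' s)"
    and \<psi>_cont: "continuous_on {0..L} \<psi>" and V_cont: "continuous_on {0..L} V"
    and eq: "AE t in lborel. t \<in> {0..L} \<longrightarrow>
      - of_real (\<epsilon>\<^sup>2) * \<psi>'' t + of_real (V t + q t) * \<psi> t = of_real E * \<psi> t"
    and q_le: "AE t in lborel. t \<in> {0..L} \<longrightarrow> \<bar>q t\<bar> \<le> C"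
    and st: "0 \<le> s" "s \<le> t" "t \<le> L"
  shows "cmod (of_real (\<epsilon>\<^sup>2) * (\<psi>' t - \<psi>' s) - integral {s..t} (\<lambda>u. of_real (V u - E) * \<psi> u))
    \<le> C * integral {s..t} (\<lambda>u. cmod (\<psi> u))"
proof -
  define h where "h u = of_real (\<epsilon>\<^sup>2) * \<psi>'' u - of_real (V u - E) * \<psi> u" for u
  have "{s..t} \<subseteq> {0..L}" using st by auto
  then have \<psi>''_int': "set_integrable lborel {s..t} \<psi>''"
    by (intro set_integrable_subset[OF \<psi>''_int]) auto
  have "continuous_on {s..t} (\<lambda>u. of_real (V u - E) * \<psi> u)"
    using \<open>{s..t} \<subseteq> {0..L}\<close>
    by (intro continuous_intros continuous_on_subset[OF V_cont] continuous_on_subset[OF \<psi>_cont])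
  then have V\<psi>_int: "set_integrable lborel {s..t} (\<lambda>u. of_real (V u - E) * \<psi> u)"
    by (rule borel_integrable_atLeastAtMost')
  have h_int: "set_integrable lborel {s..t} h"
    unfolding h_def by (intro set_integral_diff(1) set_integrable_mult_right \<psi>''_int' V\<psi>_int)
  have "of_real (\<epsilon>\<^sup>2) * (\<psi>' t - \<psi>' s) - integral {s..t} (\<lambda>u. of_real (V u - E) * \<psi> u)
      = integral {s..t} (\<lambda>u. of_real (\<epsilon>\<^sup>2) * \<psi>'' u) - integral {s..t} (\<lambda>u. of_real (V u - E) * \<psi> u)"
    by (simp only: primitive_increment_eq_integral[OF \<psi>''_int \<psi>'_eq st] integral_mult_right)
  also have "\<dots> = integral {s..t} h"
    unfolding h_def[abs_def]
    using set_borel_integral_eq_integral(1)[OF \<psi>''_int'] set_borel_integral_eq_integral(1)[OF V\<psi>_int]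
    by (intro integral_diff[symmetric] integrable_on_mult_right)
  also have "cmod \<dots> \<le> integral {s..t} (\<lambda>u. C * cmod (\<psi> u))"
  proof (rule norm_integral_le_AE[OF h_int])
    show "continuous_on {s..t} (\<lambda>u. C * cmod (\<psi> u))"
      using \<open>{s..t} \<subseteq> {0..L}\<close> by (intro continuous_intros continuous_on_subset[OF \<psi>_cont])
    from eq q_le show "AE u in lborel. u \<in> {s..t} \<longrightarrow> norm (h u) \<le> C * cmod (\<psi> u)"
    proof eventually_elim
      case (elim u)
      show ?case
      proof
        assume "u \<in> {s..t}"
        with \<open>{s..t} \<subseteq> {0..L}\<close> have "u \<in> {0..L}" by blast
        then have "h u = of_real (q u) * \<psi> u"
          using elim(1) unfolding h_def of_real_add of_real_diff by algebra
        then show "norm (h u) \<le> C * cmod (\<psi> u)"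
          using elim(2) \<open>u \<in> {0..L}\<close> by (simp add: norm_mult mult_right_mono)
      qed
    qed
  qed
  also have "\<dots> = C * integral {s..t} (\<lambda>u. cmod (\<psi> u))"
    by simp
  finally show ?thesis .
qed

lemma connected_component_Icc_subset:
  fixes x y :: real
  assumes "connected_component S x y"
  shows "{min x y..max x y} \<subseteq> S"
proof -
  obtain T where "connected T" "T \<subseteq> S" "x \<in> T" "y \<in> T"
    using assms unfolding connected_component_def by blast
  then have "{x..y} \<subseteq> S" and "{y..x} \<subseteq> S"
    using connected_contains_Icc by blast+
  then show ?thesis by (auto simp: min_def max_def)
qed

theorem lemma2p5:
  fixes L \<epsilon> \<alpha> E x y :: real
    and V V' q :: "real \<Rightarrow> real"
    and \<psi> \<psi>' \<psi>'' :: "real \<Rightarrow> complex"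
  assumes L_pos: "L > 0"
    and V_deriv: "\<And>t. t \<in> {0..L} \<Longrightarrow> (V has_real_derivative V' t) (at t within {0..L})"
    and V'_cont: "continuous_on {0..L} V'"
    and eps_pos: "\<epsilon> > 0"
    and q_meas: "q \<in> borel_measurable lborel"
    and q_bdd: "\<exists>C. AE t in lborel. t \<in> {0..L} \<longrightarrow> \<bar>q t\<bar> \<le> C"
    and alpha_pos: "\<alpha> > 0"
    \<comment> \<open>\<psi> \<in> H^2(0,L) \<inter> H^1_0(0,L): C^1 representative whose derivative is absolutely
        continuous with second derivative in L^2, vanishing at the endpoints\<close>
    and psi_deriv: "\<And>t. t \<in> {0..L} \<Longrightarrow> (\<psi> has_vector_derivative \<psi>' t) (at t within {0..L})"
    and psi''_meas: "\<psi>'' \<in> borel_measurable lborel"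
    and psi''_int: "set_integrable lborel {0..L} \<psi>''"
    and psi''_L2: "set_integrable lborel {0..L} (\<lambda>t. (cmod (\<psi>'' t))\<^sup>2)"
    and psi'_AC: "\<And>t. t \<in> {0..L} \<Longrightarrow> \<psi>' t = \<psi>' 0 + (LBINT s=0..t. \<psi>'' s)"
    and psi_bc: "\<psi> 0 = 0" "\<psi> L = 0"
    and psi_norm: "(LINT t:{0..L}|lborel. (cmod (\<psi> t))\<^sup>2) = 1"
    and eq: "AE t in lborel. t \<in> {0..L} \<longrightarrow>
               - complex_of_real (\<epsilon>\<^sup>2) * \<psi>'' t + complex_of_real (V t + q t) * \<psi> t
                 = complex_of_real E * \<psi> t"
    and comp: "connected_component {z \<in> {0..L}. V z - E \<ge> \<alpha>\<^sup>2} x y"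
  shows "Eplus \<epsilon> V E \<psi> \<psi>' x
           \<le> exp (2 / \<epsilon> * \<bar>LBINT s=x..y. sqrt (V s - E)\<bar>
                  + sup_norm_on L V' / \<alpha>\<^sup>2 * L
                  + Linf_norm L q / (\<alpha> * \<epsilon>) * L)
             * Eplus \<epsilon> V E \<psi> \<psi>' y"
proof -
  define a b where "a = min x y" and "b = max x y"
  define C M where "C = Linf_norm L q" and "M = sup_norm_on L V'"
  have "{a..b} \<subseteq> {z \<in> {0..L}. V z - E \<ge> \<alpha>\<^sup>2}"
    unfolding a_def b_def by (rule connected_component_Icc_subset[OF comp])
  then have ab: "{a..b} \<subseteq> {0..L}" and above: "\<And>t. t \<in> {a..b} \<Longrightarrow> V t - E \<ge> \<alpha>\<^sup>2"
    by auto
  have "C \<ge> 0" and q_le: "AE t in lborel. t \<in> {0..L} \<longrightarrow> \<bar>q t\<bar> \<le> C"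
    using AE_abs_le_Linf_norm[OF q_bdd] by (simp_all add: C_def)
  have V'_le: "\<And>t. t \<in> {0..L} \<Longrightarrow> \<bar>V' t\<bar> \<le> M"
    unfolding M_def using V'_cont by (rule abs_le_sup_norm_on)
  then have "M \<ge> 0" using order_trans[OF abs_ge_zero V'_le[of 0]] L_pos by simp
  have V_cont: "continuous_on {0..L} V"
    using V_deriv DERIV_continuous continuous_on_eq_continuous_within by blast
  have \<psi>_cont: "continuous_on {0..L} \<psi>"
    using psi_deriv has_vector_derivative_continuous continuous_on_eq_continuous_within by blast
  have "Eplus \<epsilon> V E \<psi> \<psi>' x \<le> exp (2 / \<epsilon> * \<bar>LBINT s=x..y. sqrt (V s - E)\<bar>
      + \<bar>y - x\<bar> * (M / \<alpha>\<^sup>2 + C / (\<alpha> * \<epsilon>))) * Eplus \<epsilon> V E \<psi> \<psi>' y"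
    using ab eps_pos alpha_pos \<open>C \<ge> 0\<close> above
    by (intro Eplus_le_exp_Eplus[where a = a and b = b and V' = V']
        has_vector_derivative_within_subset[OF psi_deriv] has_field_derivative_subset[OF V_deriv]
        continuous_on_subset[OF continuous_on_primitive[OF psi''_int psi'_AC]]
        Schroedinger_increment_le[OF psi''_int psi'_AC \<psi>_cont V_cont eq q_le] V'_le)
      (auto simp: a_def b_def)
  also have "\<dots> \<le> exp (2 / \<epsilon> * \<bar>LBINT s=x..y. sqrt (V s - E)\<bar>
      + M / \<alpha>\<^sup>2 * L + C / (\<alpha> * \<epsilon>) * L) * Eplus \<epsilon> V E \<psi> \<psi>' y"
  proof (intro mult_right_mono Eplus_nonneg)
    have "\<bar>y - x\<bar> * (M / \<alpha>\<^sup>2 + C / (\<alpha> * \<epsilon>)) \<le> L * (M / \<alpha>\<^sup>2 + C / (\<alpha> * \<epsilon>))"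
      using ab \<open>M \<ge> 0\<close> \<open>C \<ge> 0\<close> eps_pos alpha_pos
      by (intro mult_right_mono) (auto simp: a_def b_def)
    then show "exp (2 / \<epsilon> * \<bar>LBINT s=x..y. sqrt (V s - E)\<bar>
          + \<bar>y - x\<bar> * (M / \<alpha>\<^sup>2 + C / (\<alpha> * \<epsilon>)))
        \<le> exp (2 / \<epsilon> * \<bar>LBINT s=x..y. sqrt (V s - E)\<bar> + M / \<alpha>\<^sup>2 * L + C / (\<alpha> * \<epsilon>) * L)"
      by (simp add: algebra_simps)
    have "V y - E \<ge> \<alpha>\<^sup>2" using above by (simp add: a_def b_def)
    then show "E \<le> V y" using zero_le_power2[of \<alpha>] by linarith
  qed
  finally show ?thesis unfolding C_def M_def .
qed

end
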